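(* Let $v_1,\dots,v_{d+1}$ be the vertices of a $d$-simplex in general position. With $s_0=1$ and $z(\sigma,0)=1$, for every $0\le\ell\le d$, $$\sum_{\sigma\in\mathfrak S_d}\operatorname{sign}(\sigma)g_d(z(\sigma,1),\dots,z(\sigma,d))=\frac{1}{(d-\ell)!}\sum_{\sigma\in\mathfrak S_d}\operatorname{sign}(\sigma)\sum_{s_1=1}^{\frac{z(\sigma,1)}{z(\sigma,0)}s_0}\cdots\sum_{s_\ell=1}^{\frac{z(\sigma,\ell)}{z(\sigma,\ell-1)}s_{\ell-1}}\frac{\prod_{j=\ell+1}^dz(\sigma,j)}{z(\sigma,\ell)^{d-\ell}}\,s_\ell^{\,d-\ell},$$ with extended sums. In particular ($\ell=0$): $\sum_{\sigma}\operatorname{sign}(\sigma)g_d(z(\sigma,1),\dots,z(\sigma,d))=\frac1{d!}\sum_\sigma\operatorname{sign}(\sigma)\prod_{j=1}^dz(\sigma,j)$.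
   Context: Write $v_i=(x_{i,1},\dots,x_{i,d})$. $\pi^{(j)}$ forgets the last $j$ coordinates; general position means that for every $0\le k\le d-1$ and every $(k+1)$-subset $U$ of the vertices, $\pi^{(d-k)}(\mathrm{conv}(U))$ is a $k$-simplex. $X(\sigma,k)$ ($1\le k\le d$) is the $(k+1)\times(k+1)$ matrix with rows $(1,x_{\sigma(r),1},\dots,x_{\sigma(r),k})$, $r=1,\dots,k$, and last row $(1,x_{d+1,1},\dots,x_{d+1,k})$; $Y(\sigma,k)$ the $k\times k$ matrix with rows $(1,x_{\sigma(r),1},\dots,x_{\sigma(r),k-1})$; $z(\sigma,k)=\det X(\sigma,k)/\det Y(\sigma,k)$. $P_k(x)=(B_{k+1}(x+1)-B_{k+1})/(k+1)$ with $B_k(x)$ the Bernoulli polynomials; extended sum $\sum_{s=1}^u\sum_kh_ks^k:=h_0u+\sum_{k\ge1}h_kP_k(u)$. $f_d(a_1,\dots,a_d)=\sum_{s_1=1}^{a_1}\sum_{s_2=1}^{a_2s_1}\cdots\sum_{s_d=1}^{a_ds_{d-1}}1$ (extended sums, innermost first), $g_d(b_1,\dots,b_d)=f_d(b_1,b_2/b_1,\dots,b_d/b_{d-1})$. *)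

theory Defs
  imports "Jordan_Normal_Form.Determinant" "HOL-Computational_Algebra.Polynomial"
          "HOL-Combinatorics.Permutations"
begin

text \<open>A point of R^m is represented as a function nat => real whose coordinates
  are indexed 1..m (all other values are 0).  Vertex i of the configuration has
  coordinates x i 1, ..., x i d.\<close>

definition vertex :: "nat \<Rightarrow> (nat \<Rightarrow> nat \<Rightarrow> real) \<Rightarrow> nat \<Rightarrow> (nat \<Rightarrow> real)" where
  "vertex d x i = (\<lambda>j. if j \<in> {1..d} then x i j else 0)"

definition proj_first :: "nat \<Rightarrow> (nat \<Rightarrow> real) \<Rightarrow> (nat \<Rightarrow> real)" where
  "proj_first k p = (\<lambda>j. if j \<in> {1..k} then p j else 0)"

definition conv_hull :: "(nat \<Rightarrow> real) set \<Rightarrow> (nat \<Rightarrow> real) set" where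
  "conv_hull S = {q. \<exists>F c. finite F \<and> F \<subseteq> S \<and> (\<forall>p\<in>F. 0 \<le> c p) \<and> sum c F = 1 \<and>
                       q = (\<lambda>j. \<Sum>p\<in>F. c p * p j)}"

definition aff_independent :: "(nat \<Rightarrow> real) set \<Rightarrow> bool" where
  "aff_independent C \<longleftrightarrow> (\<forall>c. sum c C = 0 \<and> (\<forall>j. (\<Sum>p\<in>C. c p * p j) = 0) \<longrightarrow> (\<forall>p\<in>C. c p = 0))"

definition is_simplex :: "nat \<Rightarrow> (nat \<Rightarrow> real) set \<Rightarrow> bool" where
  "is_simplex k T \<longleftrightarrow> (\<exists>C. finite C \<and> card C = k + 1 \<and> aff_independent C \<and> T = conv_hull C)"

definition general_position :: "nat \<Rightarrow> (nat \<Rightarrow> nat \<Rightarrow> real) \<Rightarrow> bool" where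
  "general_position d x \<longleftrightarrow>
     (\<forall>k U. k \<le> d - 1 \<and> k < d \<and> U \<subseteq> {1..d+1} \<and> card U = k + 1 \<longrightarrow>
        is_simplex k (proj_first k ` conv_hull (vertex d x ` U)))"

definition Xmat :: "nat \<Rightarrow> (nat \<Rightarrow> nat \<Rightarrow> real) \<Rightarrow> (nat \<Rightarrow> nat) \<Rightarrow> nat \<Rightarrow> real mat" where
  "Xmat d x \<sigma> k = mat (k+1) (k+1) (\<lambda>(r, c).
      let i = (if r < k then \<sigma> (r+1) else d + 1) in if c = 0 then 1 else x i c)"

definition Ymat :: "(nat \<Rightarrow> nat \<Rightarrow> real) \<Rightarrow> (nat \<Rightarrow> nat) \<Rightarrow> nat \<Rightarrow> real mat" where
  "Ymat x \<sigma> k = mat k k (\<lambda>(r, c). if c = 0 then 1 else x (\<sigma> (r+1)) c)"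

definition zval :: "nat \<Rightarrow> (nat \<Rightarrow> nat \<Rightarrow> real) \<Rightarrow> (nat \<Rightarrow> nat) \<Rightarrow> nat \<Rightarrow> real" where
  "zval d x \<sigma> k = (if k = 0 then 1 else det (Xmat d x \<sigma> k) / det (Ymat x \<sigma> k))"

fun bernoulli_num :: "nat \<Rightarrow> real" where
  "bernoulli_num n = (if n = 0 then 1 else
      - (\<Sum>i<n. of_nat (Suc n choose i) * bernoulli_num i) / of_nat (Suc n))"

definition bernoulli_poly :: "nat \<Rightarrow> real poly" where
  "bernoulli_poly n = (\<Sum>i\<le>n. monom (of_nat (n choose i) * bernoulli_num i) (n - i))"

definition Ppoly :: "nat \<Rightarrow> real poly" where
  "Ppoly k = smult (1 / of_nat (k + 1))
      (pcompose (bernoulli_poly (k + 1)) [:1, 1:] - [:bernoulli_num (k + 1):])"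

definition ext_sum :: "real poly \<Rightarrow> real poly" where
  "ext_sum h = smult (coeff h 0) [:0, 1:] + (\<Sum>k\<in>{1..degree h}. smult (coeff h k) (Ppoly k))"

text \<open>nested_sum [a_1,...,a_m] h: the polynomial in s_0 given by
  sum_{s_1=1}^{a_1 s_0} ... sum_{s_m=1}^{a_m s_{m-1}} h(s_m) (extended sums, innermost first).\<close>
fun nested_sum :: "real list \<Rightarrow> real poly \<Rightarrow> real poly" where
  "nested_sum [] h = h"
| "nested_sum (a # as) h = pcompose (ext_sum (nested_sum as h)) [:0, a:]"

definition f_fun :: "real list \<Rightarrow> real" where
  "f_fun as = poly (nested_sum as 1) 1"

definition g_fun :: "real list \<Rightarrow> real" where
  "g_fun bs = f_fun (map2 (/) bs (1 # bs))"

end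

theory Submission
  imports Defs
begin

(*
  Write E_l(sigma) for the summand on the right-hand side. Evaluating the innermost extended
  sum, over s_l, produces a Faulhaber polynomial of degree d - l + 1 without constant term; its
  leading term turns E_l into E_(l-1) / (d - l + 1), and the remaining terms have the shape
  z_l^k / z_l^(d-l) * prod_(j>l) z_j * G(z_1, ..., z_(l-1)) with 1 <= k <= d - l.  Their signed
  sums over S_d vanish: fixing sigma(1) = b, every z(sigma, j) is (x_(d+1),1 - x_b,1) times the
  corresponding z of the configuration projected centrally from v_b (one dimension lower), so
  by induction the sum over b becomes Lagrange's identity
  sum_w w^k / prod_(w' ~= w) (w - w') = [k = N - 1] for N distinct nodes and k < N.
  Descending from l = d, where E_d = g_d, down to l gives the factor 1/(d - l)!.  General
  position makes every determinant that occurs nonzero.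
*)

lemma ext_sum_conv_sum_le:
  assumes "degree h \<le> N"
  shows "ext_sum h = smult (coeff h 0) [:0, 1:] + (\<Sum>k\<in>{1..N}. smult (coeff h k) (Ppoly k))"
proof -
  have "{1..N} = {1..degree h} \<union> {degree h + 1..N}" using assms by auto
  moreover have "(\<Sum>k\<in>{degree h + 1..N}. smult (coeff h k) (Ppoly k)) = 0"
    by (rule sum.neutral) (auto simp: coeff_eq_0)
  ultimately show ?thesis
    unfolding ext_sum_def by (simp add: sum.union_disjoint)
qed

lemma ext_sum_add: "ext_sum (p + q) = ext_sum p + ext_sum q"
proof -
  let ?N = "max (degree p) (degree q)"
  have "degree (p + q) \<le> ?N" by (rule degree_add_le) auto
  then show ?thesis
    by (simp add: ext_sum_conv_sum_le[of p ?N] ext_sum_conv_sum_le[of q ?N]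
        ext_sum_conv_sum_le[of "p + q" ?N] smult_add_left sum.distrib algebra_simps)
qed

lemma smult_sum_right: "smult c (\<Sum>i\<in>A. f i) = (\<Sum>i\<in>A. smult c (f i))"
  by (induction A rule: infinite_finite_induct) (auto simp: smult_add_right)

lemma ext_sum_smult: "ext_sum (smult c p) = smult c (ext_sum p)"
  by (simp add: ext_sum_conv_sum_le[of p "degree p"] ext_sum_conv_sum_le[of "smult c p" "degree p"]
      smult_sum_right smult_add_right)

lemma nested_sum_add: "nested_sum as (p + q) = nested_sum as p + nested_sum as q"
  by (induction as) (auto simp: ext_sum_add pcompose_add)

lemma nested_sum_smult: "nested_sum as (smult c p) = smult c (nested_sum as p)"
  by (induction as) (auto simp: ext_sum_smult pcompose_smult)

lemma nested_sum_sum: "nested_sum as (\<Sum>i\<in>A. f i) = (\<Sum>i\<in>A. nested_sum as (f i))"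
proof (induction A rule: infinite_finite_induct)
  case (infinite A)
  then show ?case using nested_sum_smult[of as 0 0] by simp
qed (auto simp: nested_sum_add nested_sum_smult[of as 0 0, simplified])

lemma nested_sum_snoc: "nested_sum (as @ [a]) h = nested_sum as (pcompose (ext_sum h) [:0, a:])"
  by (induction as) auto

lemma pcompose_scale_eq_sum_monom:
  fixes p :: "'a::comm_ring_1 poly"
  assumes "degree p \<le> N"
  shows "pcompose p [:0, a:] = (\<Sum>k\<le>N. monom (a ^ k * coeff p k) k)"
proof -
  have m: "[:0, a:] = monom a (Suc 0)"
    by (simp add: monom_Suc monom_0)
  have "degree (pcompose p [:0, a:]) \<le> N"
    using degree_pcompose_le[of p "[:0, a:]"] assms by (auto intro: order_trans)
  then have "pcompose p [:0, a:] = (\<Sum>k\<le>N. monom (coeff (pcompose p [:0, a:]) k) k)"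
    by (simp add: poly_as_sum_of_monoms')
  then show ?thesis
    unfolding m by (simp only: coeff_pcompose_monom_linear)
qed

section \<open>Bernoulli and Faulhaber polynomials\<close>

declare bernoulli_num.simps [simp del]

lemma bernoulli_num_0 [simp]: "bernoulli_num 0 = 1"
  by (subst bernoulli_num.simps) simp

lemma sum_binomial_bernoulli_num:
  assumes "n \<ge> 1"
  shows "(\<Sum>i\<le>n. of_nat (Suc n choose i) * bernoulli_num i) = 0"
proof -
  have "of_nat (Suc n) * bernoulli_num n = - (\<Sum>i<n. of_nat (Suc n choose i) * bernoulli_num i)"
    using assms by (subst bernoulli_num.simps) (simp add: field_simps)
  then show ?thesis
    by (simp add: lessThan_Suc_atMost[symmetric] binomial_Suc_n)
qed

lemma coeff_bernoulli_poly:
  "coeff (bernoulli_poly n) k =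
     (if k \<le> n then of_nat (n choose (n - k)) * bernoulli_num (n - k) else 0)"
proof -
  have "coeff (bernoulli_poly n) k =
      (\<Sum>i\<le>n. if i = n - k \<and> k \<le> n then of_nat (n choose i) * bernoulli_num i else 0)"
    unfolding bernoulli_poly_def coeff_sum coeff_monom by (intro sum.cong) auto
  then show ?thesis by (simp add: sum.delta_remove)
qed

lemma degree_bernoulli_poly: "degree (bernoulli_poly n) = n"
  by (intro antisym degree_le le_degree) (simp_all add: coeff_bernoulli_poly)

lemma lead_coeff_bernoulli_poly: "lead_coeff (bernoulli_poly n) = 1"
  by (simp add: degree_bernoulli_poly coeff_bernoulli_poly)

lemma poly_bernoulli_poly_1:
  assumes "n \<ge> 2"
  shows "poly (bernoulli_poly n) 1 = bernoulli_num n"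
proof -
  obtain m where n: "n = Suc m" and m: "m \<ge> 1" using assms by (cases n) auto
  have "poly (bernoulli_poly n) 1 = (\<Sum>i\<le>m. of_nat (n choose i) * bernoulli_num i) + bernoulli_num n"
    unfolding bernoulli_poly_def by (simp add: poly_sum poly_monom n)
  then show ?thesis
    using sum_binomial_bernoulli_num[OF m] by (simp add: n)
qed

lemma degree_bernoulli_poly_shift: "degree (pcompose (bernoulli_poly n) [:1, 1:]) = n"
  by (simp add: degree_pcompose degree_bernoulli_poly)

lemma coeff_Ppoly_0: "m \<ge> 1 \<Longrightarrow> coeff (Ppoly m) 0 = 0"
  unfolding Ppoly_def using poly_bernoulli_poly_1[of "Suc m"] by (simp add: coeff_pcompose_0)

lemma coeff_Ppoly_Suc: "coeff (Ppoly m) (Suc m) = 1 / of_nat (Suc m)"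
  using lead_coeff_comp[of "[:1, 1:]" "bernoulli_poly (Suc m)"]
  unfolding Ppoly_def by (simp add: degree_bernoulli_poly_shift lead_coeff_bernoulli_poly)

lemma degree_Ppoly_le: "degree (Ppoly m) \<le> Suc m"
  unfolding Ppoly_def
  by (rule order.trans[OF degree_smult_le], rule degree_diff_le)
     (simp_all add: degree_bernoulli_poly_shift)

definition faulhaber_poly :: "nat \<Rightarrow> real poly" where
  "faulhaber_poly m = ext_sum (monom 1 m)"

lemma faulhaber_poly_0: "faulhaber_poly 0 = [:0, 1:]"
  unfolding faulhaber_poly_def ext_sum_def by (simp add: monom_0)

lemma faulhaber_poly_eq_Ppoly:
  assumes "m \<ge> 1"
  shows "faulhaber_poly m = Ppoly m"
proof -
  have "(\<Sum>k\<in>{1..m}. smult (coeff (monom 1 m) k) (Ppoly k)) = (\<Sum>k\<in>{m}. smult (coeff (monom 1 m) k) (Ppoly k))"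
    by (rule sum.mono_neutral_right) (use assms in \<open>auto simp: coeff_monom\<close>)
  then show ?thesis
    unfolding faulhaber_poly_def ext_sum_def using assms by (simp add: degree_monom_eq coeff_monom)
qed

lemma coeff_faulhaber_poly_0: "coeff (faulhaber_poly m) 0 = 0"
  by (cases "m = 0") (simp_all add: faulhaber_poly_0 faulhaber_poly_eq_Ppoly coeff_Ppoly_0)

lemma coeff_faulhaber_poly_Suc: "coeff (faulhaber_poly m) (Suc m) = 1 / of_nat (Suc m)"
  by (cases "m = 0") (simp_all add: faulhaber_poly_0 faulhaber_poly_eq_Ppoly coeff_Ppoly_Suc)

lemma degree_faulhaber_poly_le: "degree (faulhaber_poly m) \<le> Suc m"
  by (cases "m = 0") (simp_all add: faulhaber_poly_0 faulhaber_poly_eq_Ppoly degree_Ppoly_le)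

section \<open>Determinants of point configurations\<close>

definition simplex_mat :: "(nat \<Rightarrow> real) list \<Rightarrow> real mat" where
  "simplex_mat ps = mat (length ps) (length ps) (\<lambda>(r, c). if c = 0 then 1 else (ps ! r) c)"

definition simplex_det :: "(nat \<Rightarrow> real) list \<Rightarrow> real" where
  "simplex_det ps = det (simplex_mat ps)"

text \<open>Central projection from \<open>p\<^sub>0\<close> onto the hyperplane \<open>{y. y 1 = 1}\<close>, in the coordinates
  \<open>y 2, y 3, \<dots>\<close> shifted down by one index (coordinate \<open>0\<close> is junk, never read by \<^const>\<open>simplex_mat\<close>).\<close>

definition proj_from :: "(nat \<Rightarrow> real) \<Rightarrow> (nat \<Rightarrow> real) \<Rightarrow> (nat \<Rightarrow> real)" where
  "proj_from p0 p = (\<lambda>j. (p (Suc j) - p0 (Suc j)) / (p 1 - p0 1))"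

lemma simplex_mat_carrier [simp]: "simplex_mat ps \<in> carrier_mat (length ps) (length ps)"
  unfolding simplex_mat_def by auto

lemma simplex_det_Cons_translate:
  "simplex_det (p0 # ps) =
     det (mat (length ps) (length ps) (\<lambda>(r, c). (ps ! r) (Suc c) - p0 (Suc c)))"
proof -
  let ?n = "length ps"
  define A where "A = simplex_mat (p0 # ps)"
  have A: "A \<in> carrier_mat (Suc ?n) (Suc ?n)"
    unfolding A_def using simplex_mat_carrier[of "p0 # ps"] by simp
  define F where
    "F = mat (Suc ?n) (Suc ?n) (\<lambda>(r, c). if r = c then 1 else if c = 0 then -1 else (0::real))"
  have F: "F \<in> carrier_mat (Suc ?n) (Suc ?n)" unfolding F_def by auto
  have "det F = prod_list (diag_mat F)"
    by (rule det_lower_triangular[OF _ F]) (auto simp: F_def)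
  also have "diag_mat F = map (\<lambda>i. 1) [0..<Suc ?n]"
    unfolding diag_mat_def F_def by (auto simp del: upt_Suc intro!: map_cong)
  finally have det_F: "det F = 1" by (simp add: map_replicate_const)
  define B where "B = F * A"
  have B: "B \<in> carrier_mat (Suc ?n) (Suc ?n)" unfolding B_def using F A by auto
  have B_entry: "B $$ (r, c) = (if r = 0 then A $$ (0, c) else A $$ (r, c) - A $$ (0, c))"
    if "r < Suc ?n" "c < Suc ?n" for r c
  proof -
    have "B $$ (r, c) = (\<Sum>k<Suc ?n. F $$ (r, k) * A $$ (k, c))"
      unfolding B_def using that F A by (simp add: scalar_prod_def atLeast0LessThan row_def col_def)
    also have "\<dots> = (\<Sum>k<Suc ?n. (if k = r then A $$ (k, c) else 0)
                                 + (if k = 0 \<and> r \<noteq> 0 then - A $$ (0, c) else 0))"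
      by (rule sum.cong) (use that in \<open>auto simp: F_def\<close>)
    finally show ?thesis
      using that by (auto simp: sum.distrib)
  qed
  have "det A = det B" unfolding B_def using det_mult[OF F A] det_F by simp
  also have "\<dots> = (\<Sum>i<Suc ?n. B $$ (i, 0) * cofactor B i 0)"
    by (rule laplace_expansion_column[OF B]) simp
  also have "\<dots> = (\<Sum>i<Suc ?n. if i = 0 then cofactor B 0 0 else 0)"
    by (rule sum.cong) (auto simp: B_entry A_def simplex_mat_def)
  also have "\<dots> = det (mat_delete B 0 0)" by (simp add: cofactor_def)
  also have "mat_delete B 0 0 = mat ?n ?n (\<lambda>(r, c). (ps ! r) (Suc c) - p0 (Suc c))"
    by (rule eq_matI) (use B in \<open>auto simp: mat_delete_def B_entry A_def simplex_mat_def\<close>)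
  finally show ?thesis unfolding A_def simplex_det_def .
qed

lemma simplex_det_Cons:
  assumes "\<forall>p\<in>set ps. p 1 \<noteq> p0 1"
  shows "simplex_det (p0 # ps) =
           prod_list (map (\<lambda>p. p 1 - p0 1) ps) * simplex_det (map (proj_from p0) ps)"
proof -
  let ?n = "length ps"
  let ?R = "simplex_mat (map (proj_from p0) ps)"
  define D where "D = mat ?n ?n (\<lambda>(r, c). if r = c then (ps ! r) 1 - p0 1 else 0)"
  have D: "D \<in> carrier_mat ?n ?n" unfolding D_def by auto
  have R: "?R \<in> carrier_mat ?n ?n" using simplex_mat_carrier[of "map (proj_from p0) ps"] by simp
  have "det D = prod_list (diag_mat D)"
    by (rule det_upper_triangular[OF _ D]) (auto simp: D_def)
  also have "diag_mat D = map (\<lambda>p. p 1 - p0 1) ps"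
    unfolding diag_mat_def D_def by (rule nth_equalityI) auto
  finally have det_D: "det D = prod_list (map (\<lambda>p. p 1 - p0 1) ps)" .
  have "mat ?n ?n (\<lambda>(r, c). (ps ! r) (Suc c) - p0 (Suc c)) = D * ?R"
  proof (rule eq_matI)
    fix i j assume "i < dim_row (D * ?R)" "j < dim_col (D * ?R)"
    then have i: "i < ?n" and j: "j < ?n" using D R by auto
    have "(D * ?R) $$ (i, j) = (\<Sum>k<?n. D $$ (i, k) * ?R $$ (k, j))"
      using i j D R by (simp add: scalar_prod_def atLeast0LessThan row_def col_def)
    also have "\<dots> = (\<Sum>k<?n. if k = i then ((ps ! i) 1 - p0 1) * ?R $$ (i, j) else 0)"
      by (rule sum.cong) (use i in \<open>auto simp: D_def\<close>)
    also have "\<dots> = (ps ! i) (Suc j) - p0 (Suc j)"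
      using i j assms by (auto simp: simplex_mat_def proj_from_def)
    finally show "mat ?n ?n (\<lambda>(r, c). (ps ! r) (Suc c) - p0 (Suc c)) $$ (i, j) = (D * ?R) $$ (i, j)"
      using i j by simp
  qed (use D R in auto)
  then show ?thesis
    unfolding simplex_det_Cons_translate using det_mult[OF D R] det_D by (simp add: simplex_det_def)
qed

lemma simplex_det_swap:
  assumes "k < length ps" "l < length ps" "k \<noteq> l"
  shows "simplex_det (ps[k := ps ! l, l := ps ! k]) = - simplex_det ps"
proof -
  have "simplex_mat (ps[k := ps ! l, l := ps ! k]) = swaprows k l (simplex_mat ps)"
    by (rule eq_matI) (use assms in \<open>auto simp: simplex_mat_def nth_list_update\<close>)
  then show ?thesis
    unfolding simplex_det_def using det_swaprows[OF assms simplex_mat_carrier] by simp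
qed

lemma simplex_det_Nil [simp]: "simplex_det [] = 1"
  unfolding simplex_det_def simplex_mat_def by (simp add: det_def)

lemma simplex_det_singleton [simp]: "simplex_det [p] = 1"
proof -
  have "simplex_mat [p] = 1\<^sub>m 1" by (rule eq_matI) (auto simp: simplex_mat_def)
  then show ?thesis unfolding simplex_det_def by simp
qed

lemma simplex_det_pair: "simplex_det [p0, p] = p 1 - p0 1"
  using simplex_det_Cons_translate[of p0 "[p]"] by (simp add: det_def)

section \<open>Alternating sums over rearrangements\<close>

text \<open>The signed sum of \<open>F\<close> over all rearrangements of \<open>vs\<close>, expanded according to the entry in
  the first position (cf.\ \<open>alternating_sum_eq_sum_permutes\<close>).\<close>

function alternating_sum :: "('a list \<Rightarrow> real) \<Rightarrow> 'a list \<Rightarrow> real" where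
  "alternating_sum F [] = F []"
| "alternating_sum F (a # rest) = alternating_sum (\<lambda>ys. F (a # ys)) rest
     - (\<Sum>j<length rest. alternating_sum (\<lambda>ys. F (rest ! j # ys)) (rest[j := a]))"
  by pat_completeness auto
termination by (relation "measure (\<lambda>(F, vs). length vs)") auto

lemma alternating_sum_cong:
  "(\<And>ys. mset ys = mset vs \<Longrightarrow> F ys = H ys) \<Longrightarrow> alternating_sum F vs = alternating_sum H vs"
proof (induction F vs arbitrary: H rule: alternating_sum.induct)
  case (1 F)
  then show ?case by simp
next
  case (2 F a rest)
  have "alternating_sum (\<lambda>ys. F (rest ! j # ys)) (rest[j := a])
      = alternating_sum (\<lambda>ys. H (rest ! j # ys)) (rest[j := a])" if j: "j < length rest" for j
  proof (rule "2.IH"(2))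
    show "j \<in> {..<length rest}" using j by simp
  next
    fix ys assume "mset ys = mset (rest[j := a])"
    then have "mset (rest ! j # ys) = mset (a # rest)"
      using j by (simp add: mset_update insert_DiffM)
    then show "F (rest ! j # ys) = H (rest ! j # ys)" using "2.prems" by blast
  qed
  moreover have "alternating_sum (\<lambda>ys. F (a # ys)) rest = alternating_sum (\<lambda>ys. H (a # ys)) rest"
    by (rule "2.IH"(1)) (use "2.prems" in auto)
  ultimately show ?case by simp
qed

lemma alternating_sum_mult: "alternating_sum (\<lambda>ys. c * F ys) vs = c * alternating_sum F vs"
  by (induction F vs rule: alternating_sum.induct) (simp_all add: sum_distrib_left right_diff_distrib)

lemma alternating_sum_add:
  "alternating_sum (\<lambda>ys. F ys + G ys) vs = alternating_sum F vs + alternating_sum G vs"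
proof (induction vs arbitrary: F G rule: length_induct)
  case (1 vs)
  then show ?case
    by (cases vs) (simp_all add: sum.distrib)
qed

lemma alternating_sum_sum:
  "finite K \<Longrightarrow> alternating_sum (\<lambda>ys. \<Sum>k\<in>K. F k ys) vs = (\<Sum>k\<in>K. alternating_sum (F k) vs)"
proof (induction K rule: finite_induct)
  case empty
  then show ?case using alternating_sum_mult[of 0 "\<lambda>_. 0" vs] by simp
next
  case (insert k K)
  then show ?case by (simp add: alternating_sum_add)
qed

lemma permutes_conj_transpose:
  assumes q: "q permutes S" and a: "a \<notin> S" and b: "b \<in> S"
  shows "transpose a b \<circ> q \<circ> transpose a b permutes transpose a b ` S"
proof -
  let ?t = "transpose a b"
  have "?t \<circ> q \<circ> ?t permutes insert a S"
    by (intro permutes_compose permutes_swap_id permutes_subset[OF q]) (use b in auto)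
  moreover have "(?t \<circ> q \<circ> ?t) x = x" if "x \<notin> ?t ` S" for x
  proof -
    have "?t x \<notin> S" using that by (metis image_eqI transpose_involutory)
    then show ?thesis using q by (simp add: permutes_not_in)
  qed
  ultimately show ?thesis unfolding permutes_def by metis
qed

lemma sum_permutes_transpose_Cons:
  assumes a: "a \<notin> set rest" and b: "b \<in> set rest"
  defines "t \<equiv> transpose a b"
  shows "(\<Sum>q | q permutes set rest. of_int (sign (t \<circ> q)) * F (map (t \<circ> q) (a # rest)))
       = - (\<Sum>q | q permutes set (map t rest). of_int (sign q) * F (b # map q (map t rest)))"
proof -
  have perm_t: "permutation t" unfolding t_def by (rule permutation_swap_id)
  have tt: "t \<circ> t = id" unfolding t_def by (simp add: fun_eq_iff)
  have ta: "t a = b" unfolding t_def by simp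
  have "(\<Sum>q | q permutes set rest. of_int (sign (t \<circ> q)) * F (map (t \<circ> q) (a # rest)))
      = (\<Sum>q | q permutes set rest. - (of_int (sign (t \<circ> q \<circ> t)) * F (b # map (t \<circ> q \<circ> t) (map t rest))))"
  proof (rule sum.cong[OF refl])
    fix q assume "q \<in> {q. q permutes set rest}"
    then have q: "q permutes set rest" by simp
    then have "permutation q" by (rule permutes_imp_permutation[OF finite_set])
    then have "sign (t \<circ> q) = - sign q" "sign (t \<circ> q \<circ> t) = sign q"
      using a b perm_t by (auto simp: t_def sign_compose permutation_compose sign_swap_id)
    moreover have "q a = a" using q a by (simp add: permutes_not_in)
    moreover have "t \<circ> q \<circ> t \<circ> t = t \<circ> q"
      using tt by (simp add: comp_assoc)
    ultimately show "of_int (sign (t \<circ> q)) * F (map (t \<circ> q) (a # rest))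
        = - (of_int (sign (t \<circ> q \<circ> t)) * F (b # map (t \<circ> q \<circ> t) (map t rest)))"
      by (simp add: ta)
  qed
  also have "\<dots> = - (\<Sum>q | q permutes set (map t rest). of_int (sign q) * F (b # map q (map t rest)))"
    unfolding sum_negf[symmetric]
  proof (rule sum.reindex_bij_witness[where i = "\<lambda>q. t \<circ> q \<circ> t" and j = "\<lambda>q. t \<circ> q \<circ> t"])
    fix q assume "q \<in> {q. q permutes set (map t rest)}"
    then have "transpose b a \<circ> q \<circ> transpose b a permutes transpose b a ` t ` set rest"
      using a b by (intro permutes_conj_transpose) (auto simp: t_def transpose_def)
    then show "t \<circ> q \<circ> t \<in> {q. q permutes set rest}"
      by (simp add: t_def transpose_commute image_image)
  qed (use a b tt in \<open>auto simp: permutes_conj_transpose t_def fun_eq_iff\<close>)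
  finally show ?thesis .
qed

lemma map_transpose_eq_list_update:
  assumes "distinct xs" "a \<notin> set xs" "j < length xs"
  shows "map (transpose a (xs ! j)) xs = xs[j := a]"
proof (rule nth_equalityI)
  fix r assume "r < length (map (transpose a (xs ! j)) xs)"
  moreover from this have "xs ! r \<noteq> a" using assms by auto
  ultimately show "map (transpose a (xs ! j)) xs ! r = xs[j := a] ! r"
    using assms by (auto simp: transpose_def nth_list_update nth_eq_iff_index_eq)
qed simp

lemma alternating_sum_eq_sum_permutes:
  "distinct vs \<Longrightarrow>
     (\<Sum>\<sigma> | \<sigma> permutes set vs. of_int (sign \<sigma>) * F (map \<sigma> vs)) = alternating_sum F vs"
proof (induction vs arbitrary: F rule: length_induct)
  case (1 vs)
  show ?case
  proof (cases vs)
    case Nil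
    then show ?thesis by (simp add: permutes_empty sign_id)
  next
    case (Cons a rest)
    let ?S = "set rest"
    let ?t = "\<lambda>b. transpose a b"
    have a: "a \<notin> ?S" and dist_rest: "distinct rest" using "1.prems" Cons by auto
    define f where "f \<sigma> = of_int (sign \<sigma>) * F (map \<sigma> (a # rest))" for \<sigma>
    have fixing_a: "(\<Sum>q | q permutes ?S. f q) = alternating_sum (\<lambda>ys. F (a # ys)) rest"
    proof -
      have "(\<Sum>q | q permutes ?S. f q) = (\<Sum>q | q permutes ?S. of_int (sign q) * F (a # map q rest))"
        unfolding f_def by (rule sum.cong) (use a in \<open>auto simp: permutes_not_in\<close>)
      then show ?thesis using "1.IH" Cons dist_rest by auto
    qed
    have moving_a: "(\<Sum>q | q permutes ?S. f (?t (rest ! j) \<circ> q))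
        = - alternating_sum (\<lambda>ys. F (rest ! j # ys)) (rest[j := a])" if j: "j < length rest" for j
    proof -
      have "distinct (rest[j := a])" using dist_rest a j by (simp add: distinct_list_update)
      then have "(\<Sum>q | q permutes set (rest[j := a]). of_int (sign q) * F (rest ! j # map q (rest[j := a])))
          = alternating_sum (\<lambda>ys. F (rest ! j # ys)) (rest[j := a])"
        using "1.IH"[rule_format, of "rest[j := a]" "\<lambda>ys. F (rest ! j # ys)"] Cons j by simp
      then show ?thesis
        using sum_permutes_transpose_Cons[OF a nth_mem[OF j], of F]
          map_transpose_eq_list_update[OF dist_rest a j]
        by (simp add: f_def)
    qed
    have "(\<Sum>\<sigma> | \<sigma> permutes set vs. f \<sigma>) = (\<Sum>b\<in>insert a ?S. \<Sum>q | q permutes ?S. f (?t b \<circ> q))"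
      unfolding Cons by (simp add: sum_over_permutations_insert a)
    also have "\<dots> = (\<Sum>q | q permutes ?S. f q) + (\<Sum>b\<in>?S. \<Sum>q | q permutes ?S. f (?t b \<circ> q))"
      using a by simp
    also have "(\<Sum>b\<in>?S. \<Sum>q | q permutes ?S. f (?t b \<circ> q))
        = (\<Sum>j<length rest. \<Sum>q | q permutes ?S. f (?t (rest ! j) \<circ> q))"
      by (subst sum_list_distinct_conv_sum_set[OF dist_rest, symmetric])
         (simp add: sum_list_sum_nth atLeast0LessThan)
    finally show ?thesis
      unfolding f_def[symmetric] Cons fixing_a using moving_a by (simp add: sum_negf)
  qed
qed

section \<open>Lagrange's identity\<close>

definition lagrange_sum :: "nat \<Rightarrow> real set \<Rightarrow> real" where
  "lagrange_sum k Z = (\<Sum>w\<in>Z. w ^ k / (\<Prod>w'\<in>Z - {w}. w - w'))"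

lemma lagrange_sum_Suc:
  assumes Z: "finite Z" and c: "c \<in> Z"
  shows "lagrange_sum (Suc k) Z = c * lagrange_sum k Z + lagrange_sum k (Z - {c})"
proof -
  have "lagrange_sum (Suc k) Z - c * lagrange_sum k Z
      = (\<Sum>w\<in>Z. w ^ k * (w - c) / (\<Prod>w'\<in>Z - {w}. w - w'))"
    unfolding lagrange_sum_def
    by (simp add: sum_distrib_left sum_subtractf[symmetric] algebra_simps diff_divide_distrib)
  also have "\<dots> = (\<Sum>w\<in>Z - {c}. w ^ k * (w - c) / (\<Prod>w'\<in>Z - {w}. w - w'))"
    by (rule sum.mono_neutral_right) (use Z c in auto)
  also have "\<dots> = lagrange_sum k (Z - {c})"
    unfolding lagrange_sum_def
  proof (rule sum.cong[OF refl])
    fix w assume w: "w \<in> Z - {c}"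
    have "(\<Prod>w'\<in>Z - {w}. w - w') = (w - c) * (\<Prod>w'\<in>(Z - {c}) - {w}. w - w')"
      using Z c w by (subst prod.remove[of _ c]) (auto simp: Diff_insert2[symmetric] insert_commute)
    then show "w ^ k * (w - c) / (\<Prod>w'\<in>Z - {w}. w - w') = w ^ k / (\<Prod>w'\<in>(Z - {c}) - {w}. w - w')"
      using w by simp
  qed
  finally show ?thesis by simp
qed

text \<open>For \<open>N\<close> distinct nodes and \<open>k < N\<close>, \<open>\<Sum>\<^sub>w w\<^sup>k / \<Prod>\<^sub>w\<^sub>'\<^sub>\<noteq>\<^sub>w (w - w')\<close> is the leading coefficient of
  the interpolation polynomial of \<open>w\<^sup>k\<close>.\<close>

lemma lagrange_sum_eq:
  "finite Z \<Longrightarrow> Z \<noteq> {} \<Longrightarrow> k < card Z \<Longrightarrow> lagrange_sum k Z = (if k = card Z - 1 then 1 else 0)"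
proof (induction "card Z" arbitrary: Z k)
  case 0
  then show ?case by simp
next
  case (Suc N)
  show ?case
  proof (cases "N = 0")
    case True
    then obtain a where "Z = {a}" using Suc.hyps(2) by (metis One_nat_def card_1_singletonE)
    then show ?thesis using True Suc.prems(3) Suc.hyps(2) by (simp add: lagrange_sum_def)
  next
    case False
    obtain c where c: "c \<in> Z" using Suc.prems(2) by blast
    have card_c: "card (Z - {c}) = N" using Suc.hyps(2) Suc.prems(1) c by simp
    then obtain c' where c': "c' \<in> Z - {c}" using False by (metis all_not_in_conv card.empty)
    have card_c': "card (Z - {c'}) = N" using Suc.hyps(2) Suc.prems(1) c' by simp
    have IH: "lagrange_sum j W = (if j = N - 1 then 1 else 0)"
      if "W \<subseteq> Z" "card W = N" "j < N" for W j
    proof -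
      have "finite W" using that(1) Suc.prems(1) by (rule finite_subset)
      moreover have "W \<noteq> {}" using that(2) False by auto
      ultimately show ?thesis using Suc.hyps(1)[of W j] that by simp
    qed
    have lower: "lagrange_sum j Z = 0" if j: "j < N" for j
    proof -
      have "c * lagrange_sum j Z + lagrange_sum j (Z - {c}) = c' * lagrange_sum j Z + lagrange_sum j (Z - {c'})"
        using lagrange_sum_Suc[OF Suc.prems(1) c, of j] lagrange_sum_Suc[OF Suc.prems(1), of c' j] c' by simp
      moreover have "lagrange_sum j (Z - {c}) = lagrange_sum j (Z - {c'})"
        using IH[of "Z - {c}" j] IH[of "Z - {c'}" j] card_c card_c' j by auto
      ultimately have "(c - c') * lagrange_sum j Z = 0" by (simp add: algebra_simps)
      then show ?thesis using c' by simp
    qed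
    show ?thesis
    proof (cases "k < N")
      case True
      then show ?thesis using lower Suc.hyps(2) by simp
    next
      case False
      then have k: "k = Suc (N - 1)" using Suc.prems(3) Suc.hyps(2) \<open>N \<noteq> 0\<close> by auto
      have "lagrange_sum k Z = c * lagrange_sum (N - 1) Z + lagrange_sum (N - 1) (Z - {c})"
        unfolding k by (rule lagrange_sum_Suc[OF Suc.prems(1) c])
      also have "lagrange_sum (N - 1) Z = 0" using lower \<open>N \<noteq> 0\<close> by simp
      also have "lagrange_sum (N - 1) (Z - {c}) = 1"
        using IH[of "Z - {c}" "N - 1"] card_c \<open>N \<noteq> 0\<close> by auto
      finally show ?thesis using k Suc.hyps(2) \<open>N \<noteq> 0\<close> by simp
    qed
  qed
qed

lemma lagrange_sum_image:
  assumes "inj_on f A"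
  shows "lagrange_sum k (f ` A) = (\<Sum>b\<in>A. f b ^ k / (\<Prod>c\<in>A - {b}. f b - f c))"
proof -
  have "lagrange_sum k (f ` A) = (\<Sum>b\<in>A. f b ^ k / (\<Prod>w'\<in>f ` A - {f b}. f b - w'))"
    unfolding lagrange_sum_def by (simp add: sum.reindex[OF assms])
  also have "\<dots> = (\<Sum>b\<in>A. f b ^ k / (\<Prod>c\<in>A - {b}. f b - f c))"
  proof (rule sum.cong[OF refl])
    fix b assume b: "b \<in> A"
    have "f ` A - {f b} = f ` (A - {b})" using assms b by (auto simp: inj_on_def)
    moreover have "inj_on f (A - {b})" using assms by (rule inj_on_subset) auto
    ultimately show "f b ^ k / (\<Prod>w'\<in>f ` A - {f b}. f b - w') = f b ^ k / (\<Prod>c\<in>A - {b}. f b - f c)"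
      by (simp add: prod.reindex)
  qed
  finally show ?thesis .
qed

text \<open>With vertices \<open>v\<^sub>i = P i\<close> and \<open>q = v\<^sub>d\<^sub>+\<^sub>1\<close>, \<open>z_ratio P q [\<sigma> 1, \<dots>, \<sigma> k]\<close> is \<open>z(\<sigma>, k)\<close>.\<close>

definition z_ratio :: "('a \<Rightarrow> nat \<Rightarrow> real) \<Rightarrow> (nat \<Rightarrow> real) \<Rightarrow> 'a list \<Rightarrow> real" where
  "z_ratio P q ws = simplex_det (map P ws @ [q]) / simplex_det (map P ws)"

definition nondegenerate :: "('a \<Rightarrow> nat \<Rightarrow> real) \<Rightarrow> (nat \<Rightarrow> real) \<Rightarrow> 'a list \<Rightarrow> bool" where
  "nondegenerate P q vs \<longleftrightarrow>
     (\<forall>ws. distinct ws \<and> set ws \<subseteq> set vs \<longrightarrow>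
        simplex_det (map P ws) \<noteq> 0 \<and> simplex_det (map P ws @ [q]) \<noteq> 0)"

lemma nondegenerate_first_coord_ne:
  assumes "nondegenerate P q vs" "b \<in> set vs" "c \<in> set vs" "c \<noteq> b"
  shows "P c 1 \<noteq> P b 1"
  using assms(1)[unfolded nondegenerate_def, rule_format, of "[b, c]"] assms(2-4)
  by (auto simp: simplex_det_pair)

lemma nondegenerate_apex_first_coord_ne:
  assumes "nondegenerate P q vs" "b \<in> set vs"
  shows "q 1 \<noteq> P b 1"
  using assms(1)[unfolded nondegenerate_def, rule_format, of "[b]"] assms(2)
  by (auto simp: simplex_det_pair)

lemma simplex_det_Cons_map:
  assumes "\<forall>c\<in>set ws. P c 1 \<noteq> P b 1"
  shows "simplex_det (P b # map P ws) =
           (\<Prod>c\<leftarrow>ws. P c 1 - P b 1) * simplex_det (map (proj_from (P b) \<circ> P) ws)"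
  using simplex_det_Cons[of "map P ws" "P b"] assms by (simp add: comp_def)

lemma simplex_det_Cons_map_snoc:
  assumes "\<forall>c\<in>set ws. P c 1 \<noteq> P b 1" "q 1 \<noteq> P b 1"
  shows "simplex_det (P b # map P ws @ [q]) =
           (\<Prod>c\<leftarrow>ws. P c 1 - P b 1) * (q 1 - P b 1)
           * simplex_det (map (proj_from (P b) \<circ> P) ws @ [proj_from (P b) q])"
  using simplex_det_Cons[of "map P ws @ [q]" "P b"] assms by (simp add: comp_def)

lemma nondegenerate_proj_from:
  assumes nd: "nondegenerate P q vs" and b: "b \<in> set vs" and L: "set L \<subseteq> set vs - {b}"
  shows "nondegenerate (proj_from (P b) \<circ> P) (proj_from (P b) q) L"
  unfolding nondegenerate_def
proof (intro allI impI)
  fix ws assume ws: "distinct ws \<and> set ws \<subseteq> set L"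
  then have "distinct (b # ws) \<and> set (b # ws) \<subseteq> set vs" using L b by auto
  then have "simplex_det (P b # map P ws) \<noteq> 0" "simplex_det (P b # map P ws @ [q]) \<noteq> 0"
    using nd[unfolded nondegenerate_def, rule_format, of "b # ws"] by auto
  moreover have "\<forall>c\<in>set ws. P c 1 \<noteq> P b 1"
    using ws L nondegenerate_first_coord_ne[OF nd b] by auto
  ultimately show "simplex_det (map (proj_from (P b) \<circ> P) ws) \<noteq> 0 \<and>
      simplex_det (map (proj_from (P b) \<circ> P) ws @ [proj_from (P b) q]) \<noteq> 0"
    using nondegenerate_apex_first_coord_ne[OF nd b]
    by (auto simp: simplex_det_Cons_map simplex_det_Cons_map_snoc)
qed

lemma z_ratio_Nil [simp]: "z_ratio P q [] = 1"
  by (simp add: z_ratio_def)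

text \<open>Projecting from the first vertex \<open>P b\<close> lowers the dimension by one and scales every \<open>z\<close>
  by \<open>q 1 - P b 1\<close>.\<close>

lemma z_ratio_Cons:
  assumes nd: "nondegenerate P q vs" and b: "b \<in> set vs" and ws: "set ws \<subseteq> set vs - {b}"
  shows "z_ratio P q (b # ws) = (q 1 - P b 1) * z_ratio (proj_from (P b) \<circ> P) (proj_from (P b) q) ws"
proof -
  have "\<forall>c\<in>set ws. P c 1 \<noteq> P b 1" using ws nondegenerate_first_coord_ne[OF nd b] by auto
  moreover from this have "(\<Prod>c\<leftarrow>ws. P c 1 - P b 1) \<noteq> 0" by (induction ws) auto
  ultimately show ?thesis
    unfolding z_ratio_def using nondegenerate_apex_first_coord_ne[OF nd b]
    by (simp add: simplex_det_Cons_map simplex_det_Cons_map_snoc)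
qed

lemma prod_z_ratio_Cons:
  assumes nd: "nondegenerate P q vs" and b: "b \<in> set vs" and ys: "set ys \<subseteq> set vs - {b}"
  shows "(\<Prod>j\<in>{Suc l..n}. z_ratio P q (take j (b # ys)))
       = (q 1 - P b 1) ^ (n - l) * (\<Prod>j\<in>{l..<n}. z_ratio (proj_from (P b) \<circ> P) (proj_from (P b) q) (take j ys))"
proof -
  have shift: "{Suc l..n} = Suc ` {l..<n}" by (auto simp: image_iff)
  have "(\<Prod>j\<in>{Suc l..n}. z_ratio P q (take j (b # ys))) = (\<Prod>j\<in>{l..<n}. z_ratio P q (b # take j ys))"
    by (simp only: shift, subst prod.reindex) auto
  also have "\<dots> = (\<Prod>j\<in>{l..<n}. (q 1 - P b 1) * z_ratio (proj_from (P b) \<circ> P) (proj_from (P b) q) (take j ys))"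
    by (rule prod.cong[OF refl], rule z_ratio_Cons[OF nd b]) (use ys in \<open>auto dest: in_set_takeD\<close>)
  finally show ?thesis by (simp add: prod.distrib)
qed

text \<open>Moving \<open>b\<close> to the front is a row swap of the determinant, which matches the sign in the
  recursion of \<^const>\<open>alternating_sum\<close>.\<close>

lemma alternating_sum_eq_simplex_det_mult:
  assumes dist: "distinct vs" and ne: "vs \<noteq> []"
    and first: "\<And>b L. b \<in> set vs \<Longrightarrow> distinct L \<Longrightarrow> set L = set vs - {b} \<Longrightarrow> length L = length vs - 1 \<Longrightarrow>
              alternating_sum (\<lambda>ys. F (b # ys)) L = simplex_det (P b # map P L @ [q]) * \<phi> b"
  shows "alternating_sum F vs = simplex_det (map P vs @ [q]) * (\<Sum>b\<in>set vs. \<phi> b)"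
proof -
  obtain a rest where vs: "vs = a # rest" using ne by (cases vs) auto
  have a: "a \<notin> set rest" and dist_rest: "distinct rest" using dist vs by auto
  let ?ps = "map P vs @ [q]"
  let ?Y = "simplex_det ?ps"
  have "alternating_sum (\<lambda>ys. F (a # ys)) rest = simplex_det (P a # map P rest @ [q]) * \<phi> a"
    by (rule first) (use dist vs in auto)
  then have first_a: "alternating_sum (\<lambda>ys. F (a # ys)) rest = ?Y * \<phi> a"
    by (simp only: vs list.map append_Cons)
  have first_j: "alternating_sum (\<lambda>ys. F (rest ! j # ys)) (rest[j := a]) = - ?Y * \<phi> (rest ! j)"
    if j: "j < length rest" for j
  proof -
    have "?ps ! Suc j = P (rest ! j)" "?ps ! 0 = P a" using j vs by (simp_all add: nth_append)
    moreover have "?ps[0 := P (rest ! j)] = P (rest ! j) # map P rest @ [q]" using vs by simp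
    moreover have "(P (rest ! j) # map P rest @ [q])[Suc j := P a] = P (rest ! j) # map P (rest[j := a]) @ [q]"
      using j by (simp add: map_update list_update_append)
    ultimately have swap: "P (rest ! j) # map P (rest[j := a]) @ [q] = ?ps[0 := ?ps ! Suc j, Suc j := ?ps ! 0]"
      by simp
    have "alternating_sum (\<lambda>ys. F (rest ! j # ys)) (rest[j := a])
        = simplex_det (P (rest ! j) # map P (rest[j := a]) @ [q]) * \<phi> (rest ! j)"
      by (rule first) (use j dist_rest a vs in \<open>auto simp: distinct_list_update set_update_distinct\<close>)
    also have "simplex_det (P (rest ! j) # map P (rest[j := a]) @ [q]) = - ?Y"
      unfolding swap by (rule simplex_det_swap) (use j vs in auto)
    finally show ?thesis by simp
  qed
  have "(\<Sum>j<length rest. alternating_sum (\<lambda>ys. F (rest ! j # ys)) (rest[j := a]))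
      = (\<Sum>j<length rest. - ?Y * \<phi> (rest ! j))"
    by (rule sum.cong) (simp_all add: first_j)
  then have "alternating_sum F vs = ?Y * \<phi> a - (\<Sum>j<length rest. - ?Y * \<phi> (rest ! j))"
    unfolding vs alternating_sum.simps(2) first_a by simp
  also have "\<dots> = ?Y * (\<phi> a + (\<Sum>j<length rest. \<phi> (rest ! j)))"
    by (simp add: sum_negf sum_distrib_left algebra_simps)
  also have "(\<Sum>j<length rest. \<phi> (rest ! j)) = (\<Sum>b\<in>set rest. \<phi> b)"
    using sum_list_distinct_conv_sum_set[OF dist_rest, of \<phi>]
    by (simp add: sum_list_sum_nth atLeast0LessThan)
  finally show ?thesis using a vs by simp
qed

lemma nondegenerate_inj_on_apex_diff:
  "nondegenerate P q vs \<Longrightarrow> inj_on (\<lambda>b. q 1 - P b 1) (set vs)"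
  using nondegenerate_first_coord_ne by (fastforce simp: inj_on_def)

lemma nondegenerate_lagrange_sum:
  assumes nd: "nondegenerate P q vs" and dist: "distinct vs" and k: "k < length vs"
  shows "(\<Sum>b\<in>set vs. (q 1 - P b 1) ^ k / (\<Prod>c\<in>set vs - {b}. P c 1 - P b 1))
       = (if k = length vs - 1 then 1 else 0)"
proof -
  let ?Z = "(\<lambda>b. q 1 - P b 1) ` set vs"
  have "card ?Z = length vs"
    using card_image[OF nondegenerate_inj_on_apex_diff[OF nd]] dist by (simp add: distinct_card)
  then show ?thesis
    using lagrange_sum_image[OF nondegenerate_inj_on_apex_diff[OF nd], of k] lagrange_sum_eq[of ?Z k] k
    by (cases vs) auto
qed

lemma simplex_det_proj_from_scaled:
  assumes nd: "nondegenerate P q vs" and b: "b \<in> set vs"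
    and L: "distinct L" "set L = set vs - {b}"
  shows "(q 1 - P b 1) ^ Suc k * simplex_det (map (proj_from (P b) \<circ> P) L @ [proj_from (P b) q])
       = simplex_det (P b # map P L @ [q])
         * ((q 1 - P b 1) ^ k / (\<Prod>c\<in>set vs - {b}. P c 1 - P b 1))"
proof -
  have ne: "\<forall>c\<in>set L. P c 1 \<noteq> P b 1" using nondegenerate_first_coord_ne[OF nd b] L by auto
  have "(\<Prod>c\<leftarrow>L. P c 1 - P b 1) = (\<Prod>c\<in>set vs - {b}. P c 1 - P b 1)"
    using L by (simp add: prod.distinct_set_conv_list[symmetric])
  moreover have "(\<Prod>c\<in>set vs - {b}. P c 1 - P b 1) \<noteq> 0"
    using ne L by (auto simp: prod_zero_iff)
  ultimately show ?thesis
    using nondegenerate_apex_first_coord_ne[OF nd b]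
    by (simp add: simplex_det_Cons_map_snoc[of L P b q, OF ne] field_simps)
qed

lemma alternating_sum_prod_z_ratio:
  "length vs = n \<Longrightarrow> distinct vs \<Longrightarrow> nondegenerate P q vs \<Longrightarrow>
   alternating_sum (\<lambda>ws. \<Prod>j\<in>{1..n}. z_ratio P q (take j ws)) vs = simplex_det (map P vs @ [q])"
proof (induction n arbitrary: P q vs)
  case 0
  then show ?case by simp
next
  case (Suc n)
  let ?z = "\<lambda>b. q 1 - P b 1"
  define \<phi> where "\<phi> b = ?z b ^ n / (\<Prod>c\<in>set vs - {b}. P c 1 - P b 1)" for b
  have "alternating_sum (\<lambda>ws. \<Prod>j\<in>{1..Suc n}. z_ratio P q (take j ws)) vs
      = simplex_det (map P vs @ [q]) * (\<Sum>b\<in>set vs. \<phi> b)"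
  proof (rule alternating_sum_eq_simplex_det_mult)
    fix b L assume b: "b \<in> set vs" and L: "distinct L" "set L = set vs - {b}" "length L = length vs - 1"
    let ?P' = "proj_from (P b) \<circ> P" and ?q' = "proj_from (P b) q"
    have "alternating_sum (\<lambda>ys. \<Prod>j\<in>{1..Suc n}. z_ratio P q (take j (b # ys))) L
        = alternating_sum (\<lambda>ys. ?z b ^ Suc n * (\<Prod>j\<in>{1..n}. z_ratio ?P' ?q' (take j ys))) L"
    proof (rule alternating_sum_cong)
      fix ys assume "mset ys = mset L"
      then have "set ys \<subseteq> set vs - {b}" using L by (metis mset_eq_setD order_refl)
      from prod_z_ratio_Cons[OF Suc.prems(3) b this, of 0 "Suc n"]
      show "(\<Prod>j\<in>{1..Suc n}. z_ratio P q (take j (b # ys)))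
          = ?z b ^ Suc n * (\<Prod>j\<in>{1..n}. z_ratio ?P' ?q' (take j ys))"
        by (simp add: atLeastLessThanSuc_atLeastAtMost[symmetric] prod.atLeast_Suc_lessThan)
    qed
    also have "\<dots> = ?z b ^ Suc n * simplex_det (map ?P' L @ [?q'])"
      unfolding alternating_sum_mult
      by (subst Suc.IH) (use nondegenerate_proj_from[OF Suc.prems(3) b] L Suc.prems(1) in auto)
    also have "\<dots> = simplex_det (P b # map P L @ [q]) * \<phi> b"
      unfolding \<phi>_def by (rule simplex_det_proj_from_scaled[OF Suc.prems(3) b L(1,2)])
    finally show "alternating_sum (\<lambda>ys. \<Prod>j\<in>{1..Suc n}. z_ratio P q (take j (b # ys))) L
        = simplex_det (P b # map P L @ [q]) * \<phi> b" .
  qed (use Suc.prems in auto)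
  also have "(\<Sum>b\<in>set vs. \<phi> b) = 1"
    unfolding \<phi>_def using nondegenerate_lagrange_sum[OF Suc.prems(3,2), of n] Suc.prems(1) by simp
  finally show ?case by simp
qed

text \<open>The terms left over by the lower-order coefficients of the Faulhaber polynomials; \<open>G\<close> may depend
  on the first \<open>l - 1\<close> entries.\<close>

definition z_power_term ::
    "('a list \<Rightarrow> real) \<Rightarrow> ('a \<Rightarrow> nat \<Rightarrow> real) \<Rightarrow> (nat \<Rightarrow> real) \<Rightarrow> nat \<Rightarrow> nat \<Rightarrow> nat \<Rightarrow> nat \<Rightarrow> 'a list \<Rightarrow> real"
  where
  "z_power_term G P q l i m n ws =
     G (take (l - 1) ws) * (z_ratio P q (take l ws) ^ i / z_ratio P q (take l ws) ^ m)
     * (\<Prod>j\<in>{Suc l..n}. z_ratio P q (take j ws))"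

lemma z_power_term_1_Cons:
  assumes nd: "nondegenerate P q vs" and b: "b \<in> set vs" and ys: "set ys \<subseteq> set vs - {b}"
  shows "z_power_term G P q 1 i m (Suc m) (b # ys)
       = G [] * (q 1 - P b 1) ^ i * (\<Prod>j\<in>{1..m}. z_ratio (proj_from (P b) \<circ> P) (proj_from (P b) q) (take j ys))"
proof -
  have "z_ratio P q (take 1 (b # ys)) = q 1 - P b 1"
    using z_ratio_Cons[OF nd b, of "[]"] by simp
  moreover have "q 1 - P b 1 \<noteq> 0"
    using nondegenerate_apex_first_coord_ne[OF nd b] by simp
  ultimately show ?thesis
    unfolding z_power_term_def using prod_z_ratio_Cons[OF nd b ys, of 1 "Suc m"]
    by (simp add: atLeastLessThanSuc_atLeastAtMost)
qed

lemma z_power_term_Suc_Cons: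
  assumes nd: "nondegenerate P q vs" and b: "b \<in> set vs" and ys: "set ys \<subseteq> set vs - {b}"
    and l: "l \<noteq> 0"
  shows "z_power_term G P q (Suc l) i m (Suc n) (b # ys)
       = ((q 1 - P b 1) ^ i / (q 1 - P b 1) ^ m * (q 1 - P b 1) ^ (n - l))
         * z_power_term (\<lambda>ws. G (b # ws)) (proj_from (P b) \<circ> P) (proj_from (P b) q) l i m n ys"
proof -
  have "take (Suc l - 1) (b # ys) = b # take (l - 1) ys" using l by (cases l) auto
  moreover have "z_ratio P q (take (Suc l) (b # ys))
      = (q 1 - P b 1) * z_ratio (proj_from (P b) \<circ> P) (proj_from (P b) q) (take l ys)"
    using z_ratio_Cons[OF nd b, of "take l ys"] ys by (auto dest: in_set_takeD)
  ultimately show ?thesis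
    unfolding z_power_term_def using prod_z_ratio_Cons[OF nd b ys, of "Suc l" "Suc n"]
    by (simp add: atLeastLessThanSuc_atLeastAtMost power_mult_distrib)
qed

lemma alternating_sum_z_power_term_1:
  assumes i: "1 \<le> i" "i \<le> m" and vs: "length vs = Suc m" "distinct vs" and nd: "nondegenerate P q vs"
  shows "alternating_sum (z_power_term G P q 1 i m (Suc m)) vs = 0"
proof -
  let ?z = "\<lambda>b. q 1 - P b 1"
  define \<phi> where "\<phi> b = G [] * (?z b ^ (i - 1) / (\<Prod>c\<in>set vs - {b}. P c 1 - P b 1))" for b
  have "alternating_sum (z_power_term G P q 1 i m (Suc m)) vs = simplex_det (map P vs @ [q]) * (\<Sum>b\<in>set vs. \<phi> b)"
  proof (rule alternating_sum_eq_simplex_det_mult)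
    fix b L assume b: "b \<in> set vs" and L: "distinct L" "set L = set vs - {b}" "length L = length vs - 1"
    let ?P' = "proj_from (P b) \<circ> P" and ?q' = "proj_from (P b) q"
    have "alternating_sum (\<lambda>ys. z_power_term G P q 1 i m (Suc m) (b # ys)) L
        = alternating_sum (\<lambda>ys. G [] * ?z b ^ i * (\<Prod>j\<in>{1..m}. z_ratio ?P' ?q' (take j ys))) L"
      by (rule alternating_sum_cong, rule z_power_term_1_Cons[OF nd b])
         (use L in \<open>metis mset_eq_setD order_refl\<close>)
    also have "\<dots> = G [] * (?z b ^ Suc (i - 1) * simplex_det (map ?P' L @ [?q']))"
      unfolding alternating_sum_mult using i
      by (subst alternating_sum_prod_z_ratio) (use nondegenerate_proj_from[OF nd b] L vs in auto)
    also have "\<dots> = simplex_det (P b # map P L @ [q]) * \<phi> b"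
      unfolding \<phi>_def simplex_det_proj_from_scaled[OF nd b L(1,2)] by simp
    finally show "alternating_sum (\<lambda>ys. z_power_term G P q 1 i m (Suc m) (b # ys)) L
        = simplex_det (P b # map P L @ [q]) * \<phi> b" .
  qed (use vs in auto)
  also have "(\<Sum>b\<in>set vs. \<phi> b) = 0"
    unfolding \<phi>_def sum_distrib_left[symmetric]
    using nondegenerate_lagrange_sum[OF nd vs(2), of "i - 1"] vs i by simp
  finally show ?thesis by simp
qed

lemma alternating_sum_z_power_term:
  "1 \<le> l \<Longrightarrow> l + m = n \<Longrightarrow> 1 \<le> i \<Longrightarrow> i \<le> m \<Longrightarrow> length vs = n \<Longrightarrow> distinct vs \<Longrightarrow>
   nondegenerate P q vs \<Longrightarrow> alternating_sum (z_power_term G P q l i m n) vs = 0"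
proof (induction l arbitrary: P q vs G n)
  case 0
  then show ?case by simp
next
  case (Suc l)
  show ?case
  proof (cases "l = 0")
    case True
    then show ?thesis using alternating_sum_z_power_term_1[of i m vs P q G] Suc.prems by auto
  next
    case False
    obtain n' where n': "n = Suc n'" using Suc.prems by (cases n) auto
    have "alternating_sum (z_power_term G P q (Suc l) i m n) vs = simplex_det (map P vs @ [q]) * (\<Sum>b\<in>set vs. 0)"
    proof (rule alternating_sum_eq_simplex_det_mult)
      fix b L assume b: "b \<in> set vs" and L: "distinct L" "set L = set vs - {b}" "length L = length vs - 1"
      define P' where "P' = proj_from (P b) \<circ> P"
      define q' where "q' = proj_from (P b) q"
      let ?z = "q 1 - P b 1"
      have "alternating_sum (\<lambda>ys. z_power_term G P q (Suc l) i m n (b # ys)) L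
          = alternating_sum (\<lambda>ys. (?z ^ i / ?z ^ m * ?z ^ (n' - l)) * z_power_term (\<lambda>ws. G (b # ws)) P' q' l i m n' ys) L"
        unfolding n' P'_def q'_def
        by (rule alternating_sum_cong, rule z_power_term_Suc_Cons[OF Suc.prems(7) b _ False])
           (use L in \<open>metis mset_eq_setD order_refl\<close>)
      also have "\<dots> = 0"
        unfolding alternating_sum_mult
        using Suc.IH[where P = P' and q = q' and vs = L and G = "\<lambda>ws. G (b # ws)" and n = n']
          nondegenerate_proj_from[OF Suc.prems(7) b, folded P'_def q'_def] False Suc.prems n' L by simp
      finally show "alternating_sum (\<lambda>ys. z_power_term G P q (Suc l) i m n (b # ys)) L
          = simplex_det (P b # map P L @ [q]) * 0" by simp
    qed (use Suc.prems in auto)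
    then show ?thesis by simp
  qed
qed

section \<open>General position\<close>

lemma subset_conv_hull: "S \<subseteq> conv_hull S"
  unfolding conv_hull_def by (auto intro!: exI[of _ "{p}" for p] exI[of _ "\<lambda>_. 1"])

lemma conv_hull_finite_combination:
  assumes "finite C" "a \<in> conv_hull C"
  obtains \<mu> where "\<forall>c\<in>C. 0 \<le> \<mu> c" "sum \<mu> C = 1" "a = (\<lambda>j. \<Sum>c\<in>C. \<mu> c * c j)"
proof -
  obtain F \<theta> where F: "finite F" "F \<subseteq> C" "\<forall>p\<in>F. 0 \<le> \<theta> p" "sum \<theta> F = 1"
    and a: "a = (\<lambda>j. \<Sum>p\<in>F. \<theta> p * p j)"
    using assms(2) unfolding conv_hull_def by blast
  define \<mu> where "\<mu> c = (if c \<in> F then \<theta> c else 0)" for c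
  have "sum \<mu> C = sum \<theta> F" "(\<Sum>c\<in>C. \<mu> c * c j) = (\<Sum>p\<in>F. \<theta> p * p j)" for j
    unfolding \<mu>_def using F(2) assms(1)
    by (simp_all add: if_distrib[of "\<lambda>t. t * _"] sum.If_cases Int_absorb1 cong: if_cong)
  then show thesis using that[of \<mu>] F a by (auto simp: \<mu>_def)
qed

lemma aff_independent_coeffs_unique:
  assumes C: "finite C" "aff_independent C" and c: "c \<in> C"
    and \<nu>: "sum \<nu> C = 1" "c = (\<lambda>j. \<Sum>c'\<in>C. \<nu> c' * c' j)"
  shows "c' \<in> C \<Longrightarrow> \<nu> c' = (if c' = c then 1 else 0)"
proof -
  define \<kappa> where "\<kappa> c' = \<nu> c' - (if c' = c then 1 else 0)" for c'
  have "sum \<kappa> C = 0"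
    unfolding \<kappa>_def using \<nu>(1) c C(1) by (simp add: sum_subtractf)
  moreover have "(\<Sum>c'\<in>C. \<kappa> c' * c' j) = 0" for j
  proof -
    have "(\<Sum>c'\<in>C. \<kappa> c' * c' j) = (\<Sum>c'\<in>C. \<nu> c' * c' j) - c j"
      unfolding \<kappa>_def using c C(1) by (simp add: left_diff_distrib sum_subtractf if_distrib[of "\<lambda>t. t * _"] cong: if_cong)
    then show ?thesis using fun_cong[OF \<nu>(2), of j] by simp
  qed
  ultimately have "\<forall>c'\<in>C. \<kappa> c' = 0" using C(2) unfolding aff_independent_def by blast
  then show "c' \<in> C \<Longrightarrow> \<nu> c' = (if c' = c then 1 else 0)" unfolding \<kappa>_def by auto
qed

lemma aff_independent_extreme_point:
  assumes C: "finite C" "aff_independent C" and c: "c \<in> C"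
    and I: "finite I" "\<forall>i\<in>I. a i \<in> conv_hull C" "\<forall>i\<in>I. 0 \<le> \<theta> i" "sum \<theta> I = 1"
    and comb: "c = (\<lambda>j. \<Sum>i\<in>I. \<theta> i * a i j)"
  obtains i where "i \<in> I" "a i = c"
proof -
  have "\<forall>i\<in>I. \<exists>\<mu>. (\<forall>c'\<in>C. 0 \<le> \<mu> c') \<and> sum \<mu> C = 1 \<and> a i = (\<lambda>j. \<Sum>c'\<in>C. \<mu> c' * c' j)"
  proof
    fix i assume "i \<in> I"
    then show "\<exists>\<mu>. (\<forall>c'\<in>C. 0 \<le> \<mu> c') \<and> sum \<mu> C = 1 \<and> a i = (\<lambda>j. \<Sum>c'\<in>C. \<mu> c' * c' j)"
      using conv_hull_finite_combination[OF C(1), of "a i"] I(2) by blast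
  qed
  then obtain M where M: "\<And>i. i \<in> I \<Longrightarrow>
      (\<forall>c'\<in>C. 0 \<le> M i c') \<and> sum (M i) C = 1 \<and> a i = (\<lambda>j. \<Sum>c'\<in>C. M i c' * c' j)"
    by (auto dest!: bchoice)
  define \<nu> where "\<nu> c' = (\<Sum>i\<in>I. \<theta> i * M i c')" for c'
  have "sum \<nu> C = (\<Sum>i\<in>I. \<theta> i * sum (M i) C)"
    unfolding \<nu>_def by (simp add: sum_distrib_left sum.swap[of _ I])
  also have "\<dots> = 1" using M I(4) by simp
  finally have \<nu>_sum: "sum \<nu> C = 1" .
  have "c j = (\<Sum>c'\<in>C. \<nu> c' * c' j)" for j
  proof -
    have "c j = (\<Sum>i\<in>I. \<theta> i * (\<Sum>c'\<in>C. M i c' * c' j))"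
      unfolding comb by (rule sum.cong) (use M in auto)
    then show ?thesis
      unfolding \<nu>_def by (simp add: sum_distrib_left sum_distrib_right sum.swap[of _ I] mult.assoc)
  qed
  then have \<nu>_comb: "c = (\<lambda>j. \<Sum>c'\<in>C. \<nu> c' * c' j)" by blast
  have "\<exists>i\<in>I. \<theta> i \<noteq> 0"
  proof (rule ccontr)
    assume "\<not> (\<exists>i\<in>I. \<theta> i \<noteq> 0)"
    then have "sum \<theta> I = 0" by simp
    then show False using I(4) by simp
  qed
  then obtain i where i: "i \<in> I" "\<theta> i \<noteq> 0" by blast
  have zero: "M i c' = 0" if c': "c' \<in> C - {c}" for c'
  proof -
    have "\<nu> c' = 0" using aff_independent_coeffs_unique[OF C c \<nu>_sum \<nu>_comb] c' by simp
    then have "\<forall>i\<in>I. \<theta> i * M i c' = 0"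
      unfolding \<nu>_def using I M c' by (subst (asm) sum_nonneg_eq_0_iff) auto
    then show ?thesis using i by auto
  qed
  have "M i c = 1"
    using sum.remove[OF C(1) c, of "M i"] sum.neutral[of "C - {c}" "M i"] zero M[OF i(1)] by simp
  moreover have "a i j = M i c * c j" for j
    using sum.remove[OF C(1) c, of "\<lambda>c'. M i c' * c' j"] sum.neutral[of "C - {c}" "\<lambda>c'. M i c' * c' j"]
      zero M[OF i(1)] by simp
  ultimately show thesis using that[OF i(1)] by (simp add: fun_eq_iff)
qed

lemma simplex_image_aff_independent:
  fixes \<pi> :: "(nat \<Rightarrow> real) \<Rightarrow> nat \<Rightarrow> real"
  assumes lin: "\<And>F c. finite F \<Longrightarrow> \<pi> (\<lambda>j. \<Sum>p\<in>F. c p * p j) = (\<lambda>j. \<Sum>p\<in>F. c p * \<pi> p j)"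
    and V: "finite V" "card V \<le> Suc k" and simplex: "is_simplex k (\<pi> ` conv_hull V)"
  shows "aff_independent (\<pi> ` V)" "card (\<pi> ` V) = Suc k"
proof -
  obtain C where C: "finite C" "card C = Suc k" "aff_independent C" "\<pi> ` conv_hull V = conv_hull C"
    using simplex unfolding is_simplex_def by auto
  have "C \<subseteq> \<pi> ` V"
  proof
    fix c assume c: "c \<in> C"
    then have "c \<in> \<pi> ` conv_hull V" using C(4) subset_conv_hull by blast
    then obtain F \<theta> where F: "finite F" "F \<subseteq> V" "\<forall>p\<in>F. 0 \<le> \<theta> p" "sum \<theta> F = 1"
      and "c = \<pi> (\<lambda>j. \<Sum>p\<in>F. \<theta> p * p j)"
      unfolding conv_hull_def by blast
    then have comb: "c = (\<lambda>j. \<Sum>p\<in>F. \<theta> p * \<pi> p j)" using lin by simp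
    have "\<forall>p\<in>F. \<pi> p \<in> conv_hull C"
      using F(2) subset_conv_hull[of V] C(4) by blast
    then obtain p where "p \<in> F" "\<pi> p = c"
      using aff_independent_extreme_point[OF C(1,3) c F(1) _ F(3,4) comb] by blast
    then show "c \<in> \<pi> ` V" using F(2) by blast
  qed
  moreover have "card (\<pi> ` V) \<le> Suc k" using card_image_le[OF V(1), of \<pi>] V(2) by simp
  ultimately have "C = \<pi> ` V" using C(2) by (simp add: card_seteq V(1))
  then show "aff_independent (\<pi> ` V)" "card (\<pi> ` V) = Suc k" using C by auto
qed

lemma simplex_det_ne_0_of_aff_independent:
  assumes aff: "aff_independent (set ps)" and dist: "distinct ps" and len: "length ps = Suc k"
    and supp: "\<forall>p\<in>set ps. \<forall>j. j \<notin> {1..k} \<longrightarrow> p j = 0"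
  shows "simplex_det ps \<noteq> 0"
proof
  let ?M = "simplex_mat ps"
  assume "simplex_det ps = 0"
  moreover have M: "?M \<in> carrier_mat (Suc k) (Suc k)" using simplex_mat_carrier[of ps] len by simp
  ultimately have "det (transpose_mat ?M) = 0" unfolding simplex_det_def by (simp add: det_transpose)
  then obtain v where v: "v \<in> carrier_vec (Suc k)" "v \<noteq> 0\<^sub>v (Suc k)" "transpose_mat ?M *\<^sub>v v = 0\<^sub>v (Suc k)"
    using det_0_iff_vec_prod_zero_field[of "transpose_mat ?M" "Suc k"] M by auto
  have col: "(\<Sum>r<Suc k. ?M $$ (r, c) * v $ r) = 0" if "c < Suc k" for c
    using arg_cong[OF v(3), of "\<lambda>w. w $ c"] that v(1) M
    by (simp add: scalar_prod_def atLeast0LessThan row_def)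
  define \<kappa> where "\<kappa> p = v $ (the_inv_into {..<Suc k} (\<lambda>r. ps ! r) p)" for p
  have inj: "inj_on (\<lambda>r. ps ! r) {..<Suc k}" using dist len by (simp add: inj_on_def nth_eq_iff_index_eq)
  have set_ps: "set ps = (\<lambda>r. ps ! r) ` {..<Suc k}" using len by (auto simp: in_set_conv_nth)
  have \<kappa>: "\<kappa> (ps ! r) = v $ r" if "r < Suc k" for r
    unfolding \<kappa>_def using the_inv_into_f_f[OF inj] that by simp
  have "sum \<kappa> (set ps) = (\<Sum>r<Suc k. ?M $$ (r, 0) * v $ r)"
    unfolding set_ps sum.reindex[OF inj] using len by (intro sum.cong) (auto simp: \<kappa> simplex_mat_def)
  then have "sum \<kappa> (set ps) = 0" using col[of 0] by simp
  moreover have "(\<Sum>p\<in>set ps. \<kappa> p * p j) = 0" for j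
  proof (cases "j \<in> {1..k}")
    case True
    have "(\<Sum>p\<in>set ps. \<kappa> p * p j) = (\<Sum>r<Suc k. ?M $$ (r, j) * v $ r)"
      unfolding set_ps sum.reindex[OF inj] using len True by (intro sum.cong) (auto simp: \<kappa> simplex_mat_def)
    then show ?thesis using col[of j] True by simp
  qed (use supp in \<open>simp add: sum.neutral\<close>)
  ultimately have \<kappa>_0: "\<forall>p\<in>set ps. \<kappa> p = 0" using aff unfolding aff_independent_def by blast
  have "v $ r = 0" if "r < Suc k" for r
    using \<kappa>_0 nth_mem[of r ps] len that \<kappa>[OF that] by simp
  then have "v = 0\<^sub>v (Suc k)" using v(1) by (intro eq_vecI) auto
  then show False using v(2) by simp
qed

lemma simplex_det_ne_0_of_simplex_image:
  fixes \<pi> :: "(nat \<Rightarrow> real) \<Rightarrow> nat \<Rightarrow> real" and x :: "nat \<Rightarrow> nat \<Rightarrow> real"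
  assumes lin: "\<And>F c. finite F \<Longrightarrow> \<pi> (\<lambda>j. \<Sum>p\<in>F. c p * p j) = (\<lambda>j. \<Sum>p\<in>F. c p * \<pi> p j)"
    and \<pi>_vertex: "\<And>i j. i \<in> set us \<Longrightarrow> \<pi> (vertex d x i) j = (if j \<in> {1..k} then x i j else 0)"
    and us: "distinct us" "length us = Suc k"
    and simplex: "is_simplex k (\<pi> ` conv_hull (vertex d x ` set us))"
  shows "simplex_det (map x us) \<noteq> 0"
proof -
  let ?V = "vertex d x ` set us"
  let ?ps = "map (\<pi> \<circ> vertex d x) us"
  have "card ?V \<le> Suc k" using card_image_le[of "set us" "vertex d x"] us by (simp add: distinct_card)
  from simplex_image_aff_independent[OF lin _ this simplex]
  have aff: "aff_independent (set ?ps)" and card: "card (set ?ps) = length ?ps"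
    using us by (simp_all add: image_comp)
  have "simplex_det ?ps \<noteq> 0"
  proof (rule simplex_det_ne_0_of_aff_independent[OF aff])
    show "distinct ?ps" using card by (simp add: card_distinct)
  qed (use us \<pi>_vertex in auto)
  moreover have "simplex_mat ?ps = simplex_mat (map x us)"
    by (rule eq_matI) (use us \<pi>_vertex in \<open>auto simp: simplex_mat_def\<close>)
  ultimately show ?thesis unfolding simplex_det_def by simp
qed

lemma proj_first_sum:
  "proj_first k (\<lambda>j. \<Sum>p\<in>F. c p * p j) = (\<lambda>j. \<Sum>p\<in>F. c p * proj_first k p j)"
  unfolding proj_first_def by (auto simp: fun_eq_iff sum.neutral)

lemma simplex_det_vertices_ne_0:
  fixes x :: "nat \<Rightarrow> nat \<Rightarrow> real"
  assumes simplex: "is_simplex d (conv_hull (vertex d x ` {1..d+1}))"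
    and gp: "general_position d x"
    and us: "distinct us" "set us \<subseteq> {1..Suc d}"
  shows "simplex_det (map x us) \<noteq> 0"
proof (cases "us = []")
  case False
  define k where "k = length us - 1"
  have len: "length us = Suc k" using False by (simp add: k_def)
  have "Suc k \<le> Suc d" using card_mono[OF _ us(2)] us(1) len by (simp add: distinct_card)
  then consider "k < d" | "k = d" by linarith
  then show ?thesis
  proof cases
    case 1
    show ?thesis
    proof (rule simplex_det_ne_0_of_simplex_image[where \<pi> = "proj_first k" and k = k and d = d])
      show "is_simplex k (proj_first k ` conv_hull (vertex d x ` set us))"
        using gp us 1 len unfolding general_position_def by (simp add: distinct_card)
    qed (use us len 1 in \<open>auto simp: proj_first_sum proj_first_def vertex_def\<close>)
  next
    case 2
    then have "set us = {1..Suc d}"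
      using card_subset_eq[OF _ us(2)] us(1) len by (simp add: distinct_card)
    then show ?thesis
      using simplex_det_ne_0_of_simplex_image[where \<pi> = id and k = d and d = d] simplex us(1) len 2
      by (simp add: vertex_def)
  qed
qed simp

lemma general_position_nondegenerate:
  fixes x :: "nat \<Rightarrow> nat \<Rightarrow> real"
  assumes simplex: "is_simplex d (conv_hull (vertex d x ` {1..d+1}))"
    and gp: "general_position d x"
  shows "nondegenerate x (x (Suc d)) [1..<Suc d]"
  unfolding nondegenerate_def
proof (intro allI impI conjI)
  fix ws assume ws: "distinct ws \<and> set ws \<subseteq> set [1..<Suc d]"
  then show "simplex_det (map x ws) \<noteq> 0"
    by (intro simplex_det_vertices_ne_0[OF simplex gp]) auto
  have "simplex_det (map x (ws @ [Suc d])) \<noteq> 0"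
    using ws by (intro simplex_det_vertices_ne_0[OF simplex gp]) auto
  then show "simplex_det (map x ws @ [x (Suc d)]) \<noteq> 0" by simp
qed

text \<open>The summand of the right-hand side, for an arbitrary sequence \<open>w\<close> in place of \<open>z(\<sigma>, -)\<close>.\<close>

definition level_sum :: "nat \<Rightarrow> (nat \<Rightarrow> real) \<Rightarrow> nat \<Rightarrow> real" where
  "level_sum d w l = poly (nested_sum (map (\<lambda>i. w i / w (i - 1)) [1..<l+1])
                      (monom ((\<Prod>j\<in>{l+1..d}. w j) / w l ^ (d - l)) (d - l))) 1"

definition nested_power_sum :: "(nat \<Rightarrow> real) \<Rightarrow> nat \<Rightarrow> nat \<Rightarrow> real" where
  "nested_power_sum w l k = poly (nested_sum (map (\<lambda>i. w i / w (i - 1)) [1..<l+1]) (monom 1 k)) 1"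

lemma map_ratio_cong:
  assumes "\<And>i. i \<le> l \<Longrightarrow> w1 i = w2 i"
  shows "map (\<lambda>i. w1 i / w1 (i - 1)) [1..<l+1] = map (\<lambda>i. w2 i / w2 (i - 1)) [1..<l+1]"
  by (rule map_cong[OF refl]) (use assms in \<open>auto simp del: upt_Suc\<close>)

lemma nested_power_sum_cong:
  assumes "\<And>i. i \<le> l \<Longrightarrow> w1 i = w2 i"
  shows "nested_power_sum w1 l k = nested_power_sum w2 l k"
  unfolding nested_power_sum_def by (simp only: map_ratio_cong[of l w1 w2, OF assms])

lemma level_sum_cong:
  assumes "\<And>k. k \<le> d \<Longrightarrow> w1 k = w2 k" "l \<le> d"
  shows "level_sum d w1 l = level_sum d w2 l"
proof -
  have "(\<Prod>j\<in>{l+1..d}. w1 j) = (\<Prod>j\<in>{l+1..d}. w2 j)" by (rule prod.cong) (auto simp: assms(1))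
  moreover have "map (\<lambda>i. w1 i / w1 (i - 1)) [1..<l+1] = map (\<lambda>i. w2 i / w2 (i - 1)) [1..<l+1]"
    by (rule map_ratio_cong) (use assms in auto)
  ultimately show ?thesis
    unfolding level_sum_def assms(1)[OF assms(2)] by (simp only:)
qed

lemma level_sum_top:
  assumes "w 0 = 1"
  shows "level_sum d w d = g_fun (map w [1..<d+1])"
proof -
  have "map2 (/) (map w [1..<d+1]) (1 # map w [1..<d+1]) = map (\<lambda>i. w i / w (i - 1)) [1..<d+1]"
  proof (rule nth_equalityI)
    fix i assume "i < length (map2 (/) (map w [1..<d+1]) (1 # map w [1..<d+1]))"
    then have "i < d" by (simp del: upt_Suc)
    then show "map2 (/) (map w [1..<d+1]) (1 # map w [1..<d+1]) ! i = map (\<lambda>i. w i / w (i - 1)) [1..<d+1] ! i"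
      using assms by (cases i) (simp_all del: upt_Suc add: nth_Cons')
  qed (simp del: upt_Suc)
  then show ?thesis
    unfolding level_sum_def g_fun_def f_fun_def by simp
qed

lemma level_sum_Suc_eq_sum:
  assumes "Suc l \<le> d"
  defines "m \<equiv> d - Suc l"
  shows "level_sum d w (Suc l) = ((\<Prod>j\<in>{Suc (Suc l)..d}. w j) / w (Suc l) ^ m)
           * (\<Sum>k\<le>Suc m. (w (Suc l) / w l) ^ k * coeff (faulhaber_poly m) k * nested_power_sum w l k)"
proof -
  define as where "as = map (\<lambda>i. w i / w (i - 1)) [1..<l+1]"
  define a where "a = w (Suc l) / w l"
  define C where "C = (\<Prod>j\<in>{Suc (Suc l)..d}. w j) / w (Suc l) ^ m"
  define Q where "Q = faulhaber_poly m"
  have ratios: "map (\<lambda>i. w i / w (i - 1)) [1..<Suc l + 1] = as @ [a]"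
    unfolding as_def a_def by simp
  have "level_sum d w (Suc l) = poly (nested_sum (as @ [a]) (monom C m)) 1"
    unfolding level_sum_def ratios C_def m_def by simp
  also have "\<dots> = poly (nested_sum as (pcompose (ext_sum (monom C m)) [:0, a:])) 1"
    by (simp only: nested_sum_snoc)
  also have "ext_sum (monom C m) = smult C Q"
    unfolding Q_def faulhaber_poly_def by (simp add: ext_sum_smult[symmetric] smult_monom)
  also have "pcompose (smult C Q) [:0, a:] = smult C (\<Sum>k\<le>Suc m. smult (a ^ k * coeff Q k) (monom 1 k))"
    unfolding pcompose_smult pcompose_scale_eq_sum_monom[OF degree_faulhaber_poly_le[of m, folded Q_def]]
    by (simp add: smult_monom)
  finally show ?thesis
    unfolding nested_sum_smult nested_sum_sum nested_power_sum_def as_def[symmetric] a_def[symmetric]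
      C_def[symmetric] Q_def[symmetric]
    by (simp add: poly_sum)
qed

text \<open>The leading term of the Faulhaber polynomial reproduces the previous level.\<close>

lemma level_sum_Suc:
  assumes ld: "Suc l \<le> d"
  shows "level_sum d w (Suc l) = level_sum d w l / of_nat (d - l)
     + (\<Sum>k\<in>{1..d - Suc l}. coeff (faulhaber_poly (d - Suc l)) k *
          ((nested_power_sum w l k / w l ^ k) * (w (Suc l) ^ k / w (Suc l) ^ (d - Suc l))
           * (\<Prod>j\<in>{Suc (Suc l)..d}. w j)))"
proof -
  define m where "m = d - Suc l"
  define a where "a = w (Suc l) / w l"
  define C where "C = (\<Prod>j\<in>{Suc (Suc l)..d}. w j) / w (Suc l) ^ m"
  define Q where "Q = faulhaber_poly m"
  let ?N = "nested_power_sum w l"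
  have dl: "d - l = Suc m" unfolding m_def using ld by simp
  have "{..Suc m} = insert 0 (insert (Suc m) {1..m})" by auto
  then have Suc_level: "level_sum d w (Suc l) = C * (\<Sum>k\<in>{1..m}. a ^ k * coeff Q k * ?N k)
      + C * a ^ Suc m * (1 / of_nat (Suc m)) * ?N (Suc m)"
    using level_sum_Suc_eq_sum[OF ld, of w] coeff_faulhaber_poly_0[of m] coeff_faulhaber_poly_Suc[of m]
    unfolding m_def[symmetric] a_def[symmetric] C_def[symmetric] Q_def[symmetric]
    by (simp add: algebra_simps)
  have monom_eq: "monom c n = smult c (monom 1 n)" for c :: real and n
    by (simp add: smult_monom)
  have level: "level_sum d w l = ((\<Prod>j\<in>{Suc l..d}. w j) / w l ^ Suc m) * ?N (Suc m)"
    unfolding level_sum_def dl nested_power_sum_def Suc_eq_plus1[symmetric]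
    by (subst monom_eq) (simp only: nested_sum_smult poly_smult)
  have leading: "C * a ^ Suc m = (\<Prod>j\<in>{Suc l..d}. w j) / w l ^ Suc m"
  proof -
    have "(\<Prod>j\<in>{Suc l..d}. w j) = w (Suc l) * (\<Prod>j\<in>{Suc (Suc l)..d}. w j)"
      using ld by (simp add: prod.atLeast_Suc_atMost)
    moreover have "w (Suc l) ^ Suc m / w (Suc l) ^ m = w (Suc l)"
      by (cases "w (Suc l) = 0") auto
    moreover have "C * a ^ Suc m = (w (Suc l) ^ Suc m / w (Suc l) ^ m) * (\<Prod>j\<in>{Suc (Suc l)..d}. w j) / w l ^ Suc m"
      unfolding C_def a_def by (simp add: power_divide)
    ultimately show ?thesis by simp
  qed
  have lower: "C * (a ^ k * coeff Q k * ?N k)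
      = coeff Q k * ((?N k / w l ^ k) * (w (Suc l) ^ k / w (Suc l) ^ m) * (\<Prod>j\<in>{Suc (Suc l)..d}. w j))" for k
    unfolding C_def a_def by (simp add: power_divide mult_ac)
  show ?thesis
    unfolding Suc_level level m_def[symmetric] Q_def[symmetric] sum_distrib_left lower[symmetric] dl
    using leading by (simp add: algebra_simps)
qed

definition z_seq :: "('a \<Rightarrow> nat \<Rightarrow> real) \<Rightarrow> (nat \<Rightarrow> real) \<Rightarrow> 'a list \<Rightarrow> nat \<Rightarrow> real" where
  "z_seq P q ws k = z_ratio P q (take k ws)"

lemma z_seq_take: "i \<le> l \<Longrightarrow> z_seq P q (take l ws) i = z_seq P q ws i"
  unfolding z_seq_def by (simp add: min_def)

lemma alternating_sum_level_sum_Suc: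
  assumes nd: "nondegenerate P q vs" and vs: "distinct vs" "length vs = d" and ld: "Suc l \<le> d"
  shows "alternating_sum (\<lambda>ws. level_sum d (z_seq P q ws) (Suc l)) vs
       = alternating_sum (\<lambda>ws. level_sum d (z_seq P q ws) l) vs / of_nat (d - l)"
proof -
  let ?m = "d - Suc l"
  let ?T = "\<lambda>k ws. (nested_power_sum (z_seq P q ws) l k / z_seq P q ws l ^ k)
      * (z_seq P q ws (Suc l) ^ k / z_seq P q ws (Suc l) ^ ?m) * (\<Prod>j\<in>{Suc (Suc l)..d}. z_seq P q ws j)"
  have vanish: "alternating_sum (?T k) vs = 0" if k: "k \<in> {1..?m}" for k
  proof -
    define G where "G pre = nested_power_sum (z_seq P q pre) l k / z_seq P q pre l ^ k" for pre
    have "alternating_sum (?T k) vs = alternating_sum (z_power_term G P q (Suc l) k ?m d) vs"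
    proof (rule alternating_sum_cong)
      fix ws :: "'a list"
      have "nested_power_sum (z_seq P q (take l ws)) l k = nested_power_sum (z_seq P q ws) l k"
        by (rule nested_power_sum_cong) (simp add: z_seq_take)
      then show "?T k ws = z_power_term G P q (Suc l) k ?m d ws"
        unfolding G_def z_power_term_def by (simp add: z_seq_take) (simp add: z_seq_def)
    qed
    also have "\<dots> = 0"
      by (rule alternating_sum_z_power_term) (use k ld nd vs in auto)
    finally show ?thesis .
  qed
  have "alternating_sum (\<lambda>ws. level_sum d (z_seq P q ws) (Suc l)) vs
      = alternating_sum (\<lambda>ws. (1 / of_nat (d - l)) * level_sum d (z_seq P q ws) l
          + (\<Sum>k\<in>{1..?m}. coeff (faulhaber_poly ?m) k * ?T k ws)) vs"
    by (rule alternating_sum_cong) (simp add: level_sum_Suc[OF ld])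
  also have "\<dots> = (1 / of_nat (d - l)) * alternating_sum (\<lambda>ws. level_sum d (z_seq P q ws) l) vs
      + (\<Sum>k\<in>{1..?m}. coeff (faulhaber_poly ?m) k * alternating_sum (?T k) vs)"
    by (simp only: alternating_sum_add alternating_sum_sum[OF finite_atLeastAtMost] alternating_sum_mult)
  also have "(\<Sum>k\<in>{1..?m}. coeff (faulhaber_poly ?m) k * alternating_sum (?T k) vs) = 0"
    using vanish by simp
  finally show ?thesis by simp
qed

lemma alternating_sum_level_sum:
  assumes nd: "nondegenerate P q vs" and vs: "distinct vs" "length vs = d"
  shows "k \<le> d \<Longrightarrow> alternating_sum (\<lambda>ws. level_sum d (z_seq P q ws) d) vs
       = alternating_sum (\<lambda>ws. level_sum d (z_seq P q ws) (d - k)) vs / fact k"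
proof (induction k)
  case 0
  then show ?case by simp
next
  case (Suc k)
  have "d - k = Suc (d - Suc k)" "d - (d - Suc k) = Suc k" using Suc.prems by auto
  then show ?case
    using Suc alternating_sum_level_sum_Suc[OF nd vs, of "d - Suc k"] by simp
qed

lemma zval_eq_z_seq:
  assumes "k \<le> d"
  shows "zval d x \<sigma> k = z_seq x (x (Suc d)) (map \<sigma> [1..<Suc d]) k"
proof (cases "k = 0")
  case False
  define ws where "ws = take k (map \<sigma> [1..<Suc d])"
  have len: "length ws = k" and ws: "\<And>r. r < k \<Longrightarrow> ws ! r = \<sigma> (Suc r)"
    unfolding ws_def using assms by (simp_all del: upt_Suc)
  have "Xmat d x \<sigma> k = simplex_mat (map x ws @ [x (Suc d)])"
    by (rule eq_matI) (use len ws in \<open>auto simp: Xmat_def simplex_mat_def nth_append Let_def\<close>)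
  moreover have "Ymat x \<sigma> k = simplex_mat (map x ws)"
    by (rule eq_matI) (use len ws in \<open>auto simp: Ymat_def simplex_mat_def\<close>)
  ultimately show ?thesis
    using False unfolding zval_def z_seq_def z_ratio_def ws_def[symmetric] simplex_det_def by simp
qed (simp add: zval_def z_seq_def)

lemma sum_permutes_level_sum:
  assumes "l \<le> d"
  shows "(\<Sum>\<sigma> | \<sigma> permutes {1..d}. of_int (sign \<sigma>) * level_sum d (zval d x \<sigma>) l)
       = alternating_sum (\<lambda>ws. level_sum d (z_seq x (x (Suc d)) ws) l) [1..<Suc d]"
proof -
  have "(\<Sum>\<sigma> | \<sigma> permutes {1..d}. of_int (sign \<sigma>) * level_sum d (zval d x \<sigma>) l)
      = (\<Sum>\<sigma> | \<sigma> permutes set [1..<Suc d].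
           of_int (sign \<sigma>) * level_sum d (z_seq x (x (Suc d)) (map \<sigma> [1..<Suc d])) l)"
    using level_sum_cong[OF zval_eq_z_seq assms]
    by (simp add: atLeastLessThanSuc_atLeastAtMost del: upt_Suc)
  also have "\<dots> = alternating_sum (\<lambda>ws. level_sum d (z_seq x (x (Suc d)) ws) l) [1..<Suc d]"
    by (rule alternating_sum_eq_sum_permutes[OF distinct_upt])
  finally show ?thesis .
qed

theorem mainTheorem15:
  fixes d l :: nat and x :: "nat \<Rightarrow> nat \<Rightarrow> real"
  assumes simplex: "is_simplex d (conv_hull (vertex d x ` {1..d+1}))"
    and gp: "general_position d x"
    and l: "l \<le> d"
  shows "(\<Sum>\<sigma> | \<sigma> permutes {1..d}.
            of_int (sign \<sigma>) * g_fun (map (zval d x \<sigma>) [1..<d+1]))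
       = 1 / fact (d - l) *
         (\<Sum>\<sigma> | \<sigma> permutes {1..d}.
            of_int (sign \<sigma>) *
            poly (nested_sum (map (\<lambda>i. zval d x \<sigma> i / zval d x \<sigma> (i - 1)) [1..<l+1])
                    (monom ((\<Prod>j\<in>{l+1..d}. zval d x \<sigma> j) / zval d x \<sigma> l ^ (d - l)) (d - l)))
              1)"
proof -
  let ?S = "\<lambda>l. \<Sum>\<sigma> | \<sigma> permutes {1..d}. of_int (sign \<sigma>) * level_sum d (zval d x \<sigma>) l"
  let ?A = "\<lambda>l. alternating_sum (\<lambda>ws. level_sum d (z_seq x (x (Suc d)) ws) l) [1..<Suc d]"
  have nd: "nondegenerate x (x (Suc d)) [1..<Suc d]"
    by (rule general_position_nondegenerate[OF simplex gp])
  have "(\<Sum>\<sigma> | \<sigma> permutes {1..d}. of_int (sign \<sigma>) * g_fun (map (zval d x \<sigma>) [1..<d+1])) = ?S d"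
    by (simp add: level_sum_top zval_def del: upt_Suc)
  also have "\<dots> = ?A d" by (rule sum_permutes_level_sum) simp
  also have "\<dots> = ?A (d - (d - l)) / fact (d - l)"
    by (rule alternating_sum_level_sum[OF nd]) simp_all
  also have "?A (d - (d - l)) = ?S l"
    using sum_permutes_level_sum[OF l] l by simp
  finally show ?thesis
    unfolding level_sum_def by simp
qed

end
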